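(* Consider the problem $\min_{x\in\mathbb{R}^d} F(x):=f(x)+r(x)$ with $f(x)=\frac1n\sum_{i=1}^n f_i(x)$, where each $f_i:\mathbb{R}^d\to\mathbb{R}$ is differentiable with $\|\nabla f_i(x)\|\le G_i$ for all $x$ and $\|\nabla f_i(x)-\nabla f_i(y)\|\le L_i\|x-y\|$ for all $x,y$, and $r:\mathbb{R}^d\to\mathbb{R}$ is a (possibly non-convex, non-smooth) function whose proximal mapping exists, and $F$ attains its minimum value $F(x^* )$. Let $\tilde L=\frac1n\sum_{i=1}^n L_i>0$. Run ProxSGD-AS with a proper sampling and stepsize $0<\eta<\frac{1}{2\tilde L}$ from $x_1\in\mathbb{R}^d$: for $t=1,\dots,T$, draw $S_t\subseteq[n]$ according to the sampling (independently of all past randomness), set $g_t=\sum_{i\in S_t}\frac{1}{np_i}\nabla f_i(x_t)$ and $x_{t+1}\in \mathrm{prox}_{\eta r}(x_t-\eta g_t)$. Then for all $T\ge 1$, $$\frac1T\sum_{t=1}^T E\big[\mathrm{dist}(0,\hat\partial F(x_{t+1}))^2\big]\le \frac{C_1}{T}\sum_{t=1}^T E\big[\|\nabla f(x_t)-g_t\|^2\big]+\frac{C_2}{T}\Delta,$$ where $C_1=\frac{1+4\tilde L\eta-2\tilde L^2\eta^2}{\tilde L\eta-2\tilde L^2\eta^2}$, $C_2=\frac{2+4\tilde L\eta+4\tilde L^2\eta^2}{\eta-2\tilde L\eta^2}$ and $\Delta=F(x_1)-F(x^* )$.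
   Context: $[n]=\{1,\dots,n\}$. The proximal mapping is $\mathrm{prox}_{\eta r}(y)=\arg\min_{x\in\mathbb{R}^d}\{\frac{1}{2\eta}\|x-y\|^2+r(x)\}$, assumed nonempty; $x_{t+1}$ is any element of it. A sampling is a random subset $S\subseteq[n]$; $p_i=\mathrm{Prob}(i\in S)$, and the sampling is proper if $p_i>0$ for all $i$. The Fréchet subdifferential of $F$ at $x$ is $\hat\partial F(x)=\{v:\liminf_{\bar x\to x}\frac{F(\bar x)-F(x)-v^\top(\bar x-x)}{\|\bar x-x\|}\ge 0\}$, and $\mathrm{dist}(0,A)=\inf_{v\in A}\|v\|$ (Euclidean norm). $E$ denotes expectation over all randomness. *)

theory Defs
  imports "HOL-Analysis.Analysis" "HOL-Probability.Probability"
begin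

definition prox :: "real \<Rightarrow> ('a::real_normed_vector \<Rightarrow> real) \<Rightarrow> 'a \<Rightarrow> 'a set" where
  "prox eta r y = {x. \<forall>z. (1 / (2 * eta)) * (norm (x - y))\<^sup>2 + r x
                          \<le> (1 / (2 * eta)) * (norm (z - y))\<^sup>2 + r z}"

definition frechet_subdiff :: "('a::real_inner \<Rightarrow> real) \<Rightarrow> 'a \<Rightarrow> 'a set" where
  "frechet_subdiff F x = {v. Liminf (at x)
      (\<lambda>y. ereal ((F y - F x - inner v (y - x)) / norm (y - x))) \<ge> 0}"

definition incl_prob :: "nat set pmf \<Rightarrow> nat \<Rightarrow> real" where
  "incl_prob Sam i = measure_pmf.prob Sam {S. i \<in> S}"

primrec hist :: "nat set pmf \<Rightarrow> nat \<Rightarrow> nat set list pmf" where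
  "hist Sam 0 = return_pmf []"
| "hist Sam (Suc t) = bind_pmf (hist Sam t) (\<lambda>h. map_pmf (\<lambda>S. h @ [S]) Sam)"

definition est_grad :: "nat \<Rightarrow> nat set pmf \<Rightarrow> (nat \<Rightarrow> 'a \<Rightarrow> 'a::real_vector) \<Rightarrow> 'a \<Rightarrow> nat set \<Rightarrow> 'a" where
  "est_grad n Sam gf x S = (\<Sum>i\<in>S. (1 / (real n * incl_prob Sam i)) *\<^sub>R gf i x)"

end

theory Submission
  imports Defs
begin

(* Look at one step deterministically. If x' is in prox_{eta r}(x - eta g), optimality of x' makes
   v = grad f(x') + (x - eta g - x')/eta a Frechet subgradient of F = f + r at x'. With
   e = grad f(x) - g and d = x' - x we have v = (grad f(x') - grad f(x)) + (e - d/eta), so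
   |v| <= L|d| + |e - d/eta|; the descent lemma together with the prox inequality tested at x gives
   F(x) - F(x') >= (1/(2 eta) - L/2)|d|^2 - <e,d>. For L eta < 1/2 an elementary quadratic inequality
   turns these two facts into |v|^2 <= C1 |e|^2 + C2 (F(x) - F(x')).
   This holds along every sample path, so taking expectations over the history, telescoping and
   using F(x_{T+1}) >= F(xstar) gives the theorem. *)

lemma two_mult_le_quadratic_form:
  fixes A B C x y :: real
  assumes "0 \<le> A" "0 \<le> C" "B\<^sup>2 \<le> A * C"
  shows "2 * B * x * y \<le> A * x\<^sup>2 + C * y\<^sup>2"
proof (cases "A = 0")
  case True
  then have "B = 0" using assms(3) by simp
  then show ?thesis using assms(1,2) by (simp add: True)
next
  case False
  then have "0 \<le> A * (A * x\<^sup>2 + C * y\<^sup>2 - 2 * B * x * y)"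
  proof -
    have "A * (A * x\<^sup>2 + C * y\<^sup>2 - 2 * B * x * y) = (A * x - B * y)\<^sup>2 + (A * C - B\<^sup>2) * y\<^sup>2"
      by (simp add: algebra_simps power2_eq_square)
    then show ?thesis using assms(3) by simp
  qed
  then show ?thesis using assms(1) False by (simp add: zero_le_mult_iff)
qed

lemma small_stepsize_amgm:
  fixes u a b q :: real
  assumes u: "0 < u" "u < 1/2" and q: "q \<le> a * b"
  shows "u\<^sup>2 * (6 + 8*u) * q \<le> u\<^sup>2 * (1 + 3*u) * a\<^sup>2 + (1 + 3*u - u\<^sup>2 + 2*u^3) * b\<^sup>2"
proof -
  have "u\<^sup>2 * (6 + 8*u) * q \<le> u\<^sup>2 * (6 + 8*u) * (a * b)"
    using u q by (intro mult_left_mono) auto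
  also have "\<dots> = 2 * (u\<^sup>2 * (3 + 4*u)) * a * b" by (simp add: algebra_simps)
  also have "\<dots> \<le> u\<^sup>2 * (1 + 3*u) * a\<^sup>2 + (1 + 3*u - u\<^sup>2 + 2*u^3) * b\<^sup>2"
  proof (rule two_mult_le_quadratic_form)
    have "u^3 \<le> u\<^sup>2 / 2" "u\<^sup>2 \<le> u / 2" "u^4 \<le> u^3 / 2"
      using u by (simp_all add: power2_eq_square power3_eq_cube power4_eq_xxxx)
    moreover have "(1 + 3*u) * (1 + 3*u - u\<^sup>2 + 2*u^3) - u\<^sup>2 * (3 + 4*u)\<^sup>2
        = 1 + 6*u - u\<^sup>2 - 25*u^3 - 10*u^4"
      by (simp add: algebra_simps power2_eq_square power3_eq_cube power4_eq_xxxx)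
    ultimately have "u\<^sup>2 * (3 + 4*u)\<^sup>2 \<le> (1 + 3*u) * (1 + 3*u - u\<^sup>2 + 2*u^3)"
      using u by linarith
    then show "(u\<^sup>2 * (3 + 4*u))\<^sup>2 \<le> u\<^sup>2 * (1 + 3*u) * (1 + 3*u - u\<^sup>2 + 2*u^3)"
      using u by (simp add: power_mult_distrib mult_left_mono power2_eq_square[of u] mult.assoc)
    have "0 \<le> u^3" using u by simp
    with \<open>u\<^sup>2 \<le> u / 2\<close> u show "0 \<le> 1 + 3*u - u\<^sup>2 + 2*u^3" by linarith
  qed (use u in simp)
  finally show ?thesis .
qed

lemma weighted_square_sum_le:
  fixes u a w :: real assumes "0 \<le> u"
  shows "(u * a + w)\<^sup>2 \<le> (1 + u) * (u * a\<^sup>2 + w\<^sup>2)"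
proof -
  have "(1 + u) * (u * a\<^sup>2 + w\<^sup>2) - (u * a + w)\<^sup>2 = u * (a - w)\<^sup>2"
    by (simp add: algebra_simps power2_eq_square)
  then show ?thesis using assms by (metis diff_ge_0_iff_ge zero_le_mult_iff zero_le_power2)
qed

lemma small_stepsize_quadratic_bound:
  fixes u a b q :: real
  assumes u: "0 < u" "u < 1/2" and q: "q \<le> a * b"
  shows "(1 + u) * ((1 + u) * a\<^sup>2 + b\<^sup>2 - 2*q)
    \<le> (1 + 4*u - 2*u\<^sup>2) / (u * (1 - 2*u)) * b\<^sup>2
      + (2 + 4*u + 4*u\<^sup>2) / (1 - 2*u) * ((1 - u) / 2 * a\<^sup>2 - q)"
proof -
  define s where "s = 1 - 2*u"
  have s: "0 < s" using u by (simp add: s_def)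
  have "(1 + 4*u - 2*u\<^sup>2) * b\<^sup>2 + u * (1 + 2*u + 2*u\<^sup>2) * ((1 - u) * a\<^sup>2 - 2*q)
      - u * s * ((1 + u) * ((1 + u) * a\<^sup>2 + b\<^sup>2 - 2*q))
      = u\<^sup>2 * (1 + 3*u) * a\<^sup>2 + (1 + 3*u - u\<^sup>2 + 2*u^3) * b\<^sup>2 - u\<^sup>2 * (6 + 8*u) * q"
    by (simp add: s_def algebra_simps power2_eq_square power3_eq_cube)
  then have cleared: "u * s * ((1 + u) * ((1 + u) * a\<^sup>2 + b\<^sup>2 - 2*q))
      \<le> (1 + 4*u - 2*u\<^sup>2) * b\<^sup>2 + u * (1 + 2*u + 2*u\<^sup>2) * ((1 - u) * a\<^sup>2 - 2*q)"
    using small_stepsize_amgm[OF u q] by linarith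
  have "(1 + 4*u - 2*u\<^sup>2) / (u * s) * b\<^sup>2 + (2 + 4*u + 4*u\<^sup>2) / s * ((1 - u) / 2 * a\<^sup>2 - q)
      = ((1 + 4*u - 2*u\<^sup>2) * b\<^sup>2 + u * (1 + 2*u + 2*u\<^sup>2) * ((1 - u) * a\<^sup>2 - 2*q)) / (u * s)"
    using u s by (simp add: field_simps)
  with cleared u s show ?thesis unfolding s_def[symmetric] by (simp add: pos_le_divide_eq mult.commute)
qed

lemma prox_grad_residual_sq_le:
  fixes d e :: "'a::real_inner" and L eta v \<Delta> :: real
  assumes L: "0 < L" and eta: "0 < eta" and small: "L * eta < 1/2"
    and v: "0 \<le> v" "v \<le> L * norm d + norm (e - (1/eta) *\<^sub>R d)"
    and \<Delta>: "(1/(2*eta) - L/2) * (norm d)\<^sup>2 - inner e d \<le> \<Delta>"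
  shows "v\<^sup>2 \<le> (1 + 4*L*eta - 2*L\<^sup>2*eta\<^sup>2) / (L*eta - 2*L\<^sup>2*eta\<^sup>2) * (norm e)\<^sup>2
              + (2 + 4*L*eta + 4*L\<^sup>2*eta\<^sup>2) / (eta - 2*L*eta\<^sup>2) * \<Delta>"
proof -
  define u where "u = L * eta"
  define a where "a = norm d / eta"
  define q where "q = inner e d / eta"
  have u: "0 < u" "u < 1/2" using L eta small by (simp_all add: u_def)
  have residual: "(norm (e - (1/eta) *\<^sub>R d))\<^sup>2 = (norm e)\<^sup>2 - 2*q + a\<^sup>2"
    using dot_norm_neg[of e "(1/eta) *\<^sub>R d"] by (simp add: q_def a_def power_divide field_simps)
  have "L * norm d = u * a" using eta by (simp add: u_def a_def)
  then have "v\<^sup>2 \<le> (u * a + norm (e - (1/eta) *\<^sub>R d))\<^sup>2" using v by (simp add: power_mono)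
  also have "\<dots> \<le> (1 + u) * (u * a\<^sup>2 + (norm (e - (1/eta) *\<^sub>R d))\<^sup>2)"
    using u by (simp add: weighted_square_sum_le)
  also have "\<dots> = (1 + u) * ((1 + u) * a\<^sup>2 + (norm e)\<^sup>2 - 2*q)"
    unfolding residual by (simp add: algebra_simps)
  also have "\<dots> \<le> (1 + 4*u - 2*u\<^sup>2) / (u * (1 - 2*u)) * (norm e)\<^sup>2
      + (2 + 4*u + 4*u\<^sup>2) / (1 - 2*u) * ((1 - u) / 2 * a\<^sup>2 - q)"
    using norm_cauchy_schwarz[of e d] eta
    by (intro small_stepsize_quadratic_bound u) (simp add: q_def a_def divide_right_mono mult.commute)
  also have "(2 + 4*u + 4*u\<^sup>2) / (1 - 2*u) * ((1 - u) / 2 * a\<^sup>2 - q)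
      = (2 + 4*L*eta + 4*L\<^sup>2*eta\<^sup>2) / (eta - 2*L*eta\<^sup>2) * ((1/(2*eta) - L/2) * (norm d)\<^sup>2 - inner e d)"
    using eta u by (simp add: u_def a_def q_def power_divide field_simps power2_eq_square)
  also have "\<dots> \<le> (2 + 4*L*eta + 4*L\<^sup>2*eta\<^sup>2) / (eta - 2*L*eta\<^sup>2) * \<Delta>"
  proof (rule mult_left_mono[OF \<Delta>])
    show "0 \<le> (2 + 4*L*eta + 4*L\<^sup>2*eta\<^sup>2) / (eta - 2*L*eta\<^sup>2)"
      using L eta small by (simp add: power2_eq_square algebra_simps)
  qed
  finally show ?thesis
    by (simp add: u_def power_mult_distrib algebra_simps power2_eq_square)
qed

lemma lipschitz_gradient_descent:
  fixes f :: "'a::real_inner \<Rightarrow> real"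
  assumes der: "\<And>z. GDERIV f z :> g z"
    and lip: "\<And>x y. norm (g x - g y) \<le> L * norm (x - y)"
  shows "f y \<le> f x + inner (y - x) (g x) + L/2 * (norm (y - x))\<^sup>2"
proof -
  define d where "d = y - x"
  define \<phi> where "\<phi> t = f (x + t *\<^sub>R d) - t * inner d (g x) - L/2 * t\<^sup>2 * (norm d)\<^sup>2" for t :: real
  have \<phi>': "DERIV \<phi> t :> inner d (g (x + t *\<^sub>R d) - g x) - L * t * (norm d)\<^sup>2" for t
  proof -
    have "((\<lambda>t. f (x + t *\<^sub>R d)) has_derivative (\<lambda>s. inner (s *\<^sub>R d) (g (x + t *\<^sub>R d)))) (at t)"
      by (rule has_derivative_compose[OF _ der[unfolded gderiv_def]]) (auto intro!: derivative_eq_intros)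
    then have "((\<lambda>t. f (x + t *\<^sub>R d)) has_real_derivative inner d (g (x + t *\<^sub>R d))) (at t)"
      unfolding has_field_derivative_def by (rule has_derivative_eq_rhs) (auto simp: fun_eq_iff)
    then show ?thesis unfolding \<phi>_def
      by (auto intro!: derivative_eq_intros simp: inner_diff_right)
  qed
  have "\<phi> 1 \<le> \<phi> 0"
  proof (rule DERIV_nonpos_imp_nonincreasing[of 0 1])
    fix t :: real assume t: "0 \<le> t" "t \<le> 1"
    have "inner d (g (x + t *\<^sub>R d) - g x) \<le> norm d * norm (g (x + t *\<^sub>R d) - g x)"
      by (rule norm_cauchy_schwarz)
    also have "\<dots> \<le> norm d * (L * norm (t *\<^sub>R d))"
      using lip[of "x + t *\<^sub>R d" x] by (intro mult_left_mono) auto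
    also have "\<dots> = L * t * (norm d)\<^sup>2" using t by (simp add: power2_eq_square)
    finally show "\<exists>y. DERIV \<phi> t :> y \<and> y \<le> 0" using \<phi>' by (intro exI conjI) auto
  qed simp
  then show ?thesis unfolding \<phi>_def d_def by (simp add: inner_commute)
qed

lemma prox_subgradient_ineq:
  fixes r :: "'a::real_inner \<Rightarrow> real"
  assumes "x \<in> prox eta r y" and "0 < eta"
  shows "r x + inner ((1/eta) *\<^sub>R (y - x)) (z - x) - (1/(2*eta)) * (norm (z - x))\<^sup>2 \<le> r z"
proof -
  have "(1/(2*eta)) * (norm (x - y))\<^sup>2 + r x \<le> (1/(2*eta)) * (norm (z - y))\<^sup>2 + r z"
    using assms(1) unfolding prox_def by blast
  moreover have "(norm (z - y))\<^sup>2 = (norm (z - x))\<^sup>2 - 2 * inner (z - x) (y - x) + (norm (x - y))\<^sup>2"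
    using dot_norm_neg[of "z - x" "y - x"] by (simp add: norm_minus_commute[of x y])
  then have "(1/(2*eta)) * (norm (z - y))\<^sup>2
      = (1/(2*eta)) * (norm (z - x))\<^sup>2 - inner ((1/eta) *\<^sub>R (y - x)) (z - x) + (1/(2*eta)) * (norm (x - y))\<^sup>2"
    using assms(2) unfolding inner_scaleR_left by (simp add: inner_commute field_simps)
  ultimately show ?thesis by linarith
qed

lemma frechet_subdiff_add_gradient:
  fixes f r :: "'a::{real_inner,perfect_space} \<Rightarrow> real"
  assumes der: "GDERIV f x :> gx"
    and r: "\<And>z. r x + inner w (z - x) - c * (norm (z - x))\<^sup>2 \<le> r z"
  shows "gx + w \<in> frechet_subdiff (\<lambda>z. f z + r z) x"
proof -
  define a where "a y = (f y - f x - inner (y - x) gx) / norm (y - x) - c * norm (y - x)" for y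
  have "((\<lambda>y. (f y - f x - inner (y - x) gx) / norm (y - x)) \<longlongrightarrow> 0) (at x)"
    using der unfolding gderiv_def has_derivative_at_within by (simp add: divide_inverse mult.commute)
  moreover have "((\<lambda>y. c * norm (y - x)) \<longlongrightarrow> 0) (at x)"
    by (rule tendsto_eq_intros refl | simp)+
  ultimately have "(a \<longlongrightarrow> 0) (at x)" unfolding a_def using tendsto_diff by fastforce
  then have La: "Liminf (at x) (\<lambda>y. ereal (a y)) = 0"
    by (intro lim_imp_Liminf) (auto simp: zero_ereal_def intro: tendsto_ereal)
  have "eventually (\<lambda>y. ereal (a y)
      \<le> ereal (((f y + r y) - (f x + r x) - inner (gx + w) (y - x)) / norm (y - x))) (at x)"
    unfolding eventually_at_filter
  proof (intro always_eventually allI impI)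
    fix y assume "y \<noteq> x"
    then have ny: "norm (y - x) > 0" by simp
    have "a y * norm (y - x) = (f y - f x - inner (y - x) gx) - c * (norm (y - x))\<^sup>2"
      unfolding a_def using ny by (simp add: field_simps power2_eq_square)
    also have "\<dots> \<le> (f y + r y) - (f x + r x) - inner (gx + w) (y - x)"
      using r[of y] by (simp add: inner_add_left inner_commute[of gx] inner_commute[of w])
    finally show "ereal (a y) \<le> ereal (((f y + r y) - (f x + r x) - inner (gx + w) (y - x)) / norm (y - x))"
      using ny by (simp add: le_divide_eq)
  qed
  then have "Liminf (at x) (\<lambda>y. ereal (a y))
      \<le> Liminf (at x) (\<lambda>y. ereal (((f y + r y) - (f x + r x) - inner (gx + w) (y - x)) / norm (y - x)))"
    by (rule Liminf_mono)
  then show ?thesis unfolding frechet_subdiff_def La by simp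
qed

lemma prox_grad_step_stationarity:
  fixes f r :: "'a::{real_inner,perfect_space} \<Rightarrow> real" and gradf :: "'a \<Rightarrow> 'a"
  assumes der: "\<And>z. GDERIV f z :> gradf z"
    and lip: "\<And>x y. norm (gradf x - gradf y) \<le> L * norm (x - y)"
    and L: "0 < L" and eta: "0 < eta" and small: "L * eta < 1/2"
    and step: "x' \<in> prox eta r (x - eta *\<^sub>R g)"
  shows "(infdist 0 (frechet_subdiff (\<lambda>z. f z + r z) x'))\<^sup>2
    \<le> (1 + 4*L*eta - 2*L\<^sup>2*eta\<^sup>2) / (L*eta - 2*L\<^sup>2*eta\<^sup>2) * (norm (gradf x - g))\<^sup>2
      + (2 + 4*L*eta + 4*L\<^sup>2*eta\<^sup>2) / (eta - 2*L*eta\<^sup>2) * ((f x + r x) - (f x' + r x'))"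
proof -
  define d where "d = x' - x"
  define e where "e = gradf x - g"
  define w where "w = (1/eta) *\<^sub>R (x - eta *\<^sub>R g - x')"
  have "gradf x' + w \<in> frechet_subdiff (\<lambda>z. f z + r z) x'"
    unfolding w_def by (rule frechet_subdiff_add_gradient[OF der prox_subgradient_ineq[OF step eta]])
  then have "infdist 0 (frechet_subdiff (\<lambda>z. f z + r z) x') \<le> norm (gradf x' + w)"
    by (metis dist_0_norm infdist_le)
  also have "\<dots> \<le> norm (gradf x' - gradf x) + norm (e - (1/eta) *\<^sub>R d)"
  proof -
    have "gradf x' + w = (gradf x' - gradf x) + (e - (1/eta) *\<^sub>R d)"
      using eta by (simp add: w_def e_def d_def algebra_simps)
    then show ?thesis by (metis norm_triangle_ineq)
  qed
  also have "\<dots> \<le> L * norm d + norm (e - (1/eta) *\<^sub>R d)"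
    using lip[of x' x] by (simp add: d_def)
  finally have residual:
    "infdist 0 (frechet_subdiff (\<lambda>z. f z + r z) x') \<le> L * norm d + norm (e - (1/eta) *\<^sub>R d)" .
  have "(1/(2*eta) - L/2) * (norm d)\<^sup>2 - inner e d \<le> (f x + r x) - (f x' + r x')"
  proof -
    have "f x' \<le> f x + inner d (gradf x) + L/2 * (norm d)\<^sup>2"
      unfolding d_def using der lip by (rule lipschitz_gradient_descent)
    moreover have "r x' + (norm d)\<^sup>2 / eta + inner d g - (1/(2*eta)) * (norm d)\<^sup>2 \<le> r x"
    proof -
      have "x - eta *\<^sub>R g - x' = - (d + eta *\<^sub>R g)" and "x - x' = - d" by (simp_all add: d_def)
      then have "inner ((1/eta) *\<^sub>R (x - eta *\<^sub>R g - x')) (x - x') = (norm d)\<^sup>2 / eta + inner d g"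
        using eta by (simp only:)
          (simp add: inner_add_left inner_diff_left power2_norm_eq_inner inner_commute[of g] field_simps)
      then show ?thesis using prox_subgradient_ineq[OF step eta, of x]
        by (simp add: norm_minus_commute[of x x'] d_def)
    qed
    moreover have "inner e d = inner d (gradf x) - inner d g"
      by (simp add: e_def inner_diff_right inner_commute[of _ d])
    moreover have "(norm d)\<^sup>2 / eta - (1/(2*eta)) * (norm d)\<^sup>2 = (1/(2*eta)) * (norm d)\<^sup>2"
      by (simp add: field_simps)
    ultimately show ?thesis by (simp add: left_diff_distrib)
  qed
  with residual show ?thesis unfolding e_def
    by (intro prox_grad_residual_sq_le[OF L eta small infdist_nonneg])
qed

lemma GDERIV_scaled_sum:
  assumes "\<And>i. i \<in> I \<Longrightarrow> GDERIV (f i) x :> g i x"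
  shows "GDERIV (\<lambda>x. c * (\<Sum>i\<in>I. f i x)) x :> c *\<^sub>R (\<Sum>i\<in>I. g i x)"
proof -
  have "((\<lambda>x. \<Sum>i\<in>I. f i x) has_derivative (\<lambda>h. \<Sum>i\<in>I. inner h (g i x))) (at x)"
    using assms unfolding gderiv_def by (intro has_derivative_sum) auto
  then show ?thesis unfolding gderiv_def
    by (auto intro: has_derivative_mult_right simp: inner_sum_right)
qed

lemma lipschitz_scaled_sum:
  fixes g :: "'i \<Rightarrow> 'a::real_normed_vector \<Rightarrow> 'b::real_normed_vector"
  assumes "0 \<le> c" and "\<And>i. i \<in> I \<Longrightarrow> norm (g i x - g i y) \<le> L i * norm (x - y)"
  shows "norm (c *\<^sub>R (\<Sum>i\<in>I. g i x) - c *\<^sub>R (\<Sum>i\<in>I. g i y))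
    \<le> c * (\<Sum>i\<in>I. L i) * norm (x - y)"
proof -
  have "norm (c *\<^sub>R (\<Sum>i\<in>I. g i x) - c *\<^sub>R (\<Sum>i\<in>I. g i y)) = c * norm (\<Sum>i\<in>I. g i x - g i y)"
    using assms(1) by (simp add: sum_subtractf flip: scaleR_diff_right)
  also have "\<dots> \<le> c * (\<Sum>i\<in>I. L i * norm (x - y))"
    using assms by (intro mult_left_mono order.trans[OF norm_sum] sum_mono) auto
  finally show ?thesis by (simp add: sum_distrib_right mult.assoc)
qed

lemma set_pmf_hist: "h \<in> set_pmf (hist Sam t) \<Longrightarrow> length h = t \<and> set h \<subseteq> set_pmf Sam"
  by (induction t arbitrary: h) fastforce+

lemma finite_set_pmf_hist:
  assumes "finite (set_pmf Sam)"
  shows "finite (set_pmf (hist Sam t))"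
proof (rule finite_subset)
  show "set_pmf (hist Sam t) \<subseteq> {h. set h \<subseteq> set_pmf Sam \<and> length h = t}"
    using set_pmf_hist by blast
qed (rule finite_lists_length_eq[OF assms])

lemma expectation_hist_butlast:
  fixes \<phi> :: "nat set list \<Rightarrow> 'b::{banach,second_countable_topology}"
  shows "measure_pmf.expectation (hist Sam (Suc t)) (\<lambda>h. \<phi> (butlast h))
    = measure_pmf.expectation (hist Sam t) \<phi>"
proof -
  have "map_pmf butlast (hist Sam (Suc t)) = hist Sam t"
    by (simp add: map_bind_pmf pmf.map_comp o_def bind_return_pmf')
  then show ?thesis using integral_map_pmf[of butlast "hist Sam (Suc t)" \<phi>] by (simp only:)
qed

lemma expectation_hist_telescope:
  fixes D E \<Phi> :: "nat set list \<Rightarrow> real"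
  assumes fin: "finite (set_pmf Sam)"
    and step: "\<And>t h. h \<in> set_pmf (hist Sam (Suc t)) \<Longrightarrow>
      D h \<le> C1 * E h + C2 * (\<Phi> (butlast h) - \<Phi> h)"
  shows "(\<Sum>t=1..T. measure_pmf.expectation (hist Sam t) D)
    \<le> C1 * (\<Sum>t=1..T. measure_pmf.expectation (hist Sam t) E)
      + C2 * (\<Phi> [] - measure_pmf.expectation (hist Sam T) \<Phi>)"
proof (induction T)
  case (Suc T)
  let ?E = "\<lambda>t \<phi>. measure_pmf.expectation (hist Sam t) \<phi>"
  have int: "integrable (measure_pmf (hist Sam t)) \<phi>" for t and \<phi> :: "_ \<Rightarrow> real"
    by (rule integrable_measure_pmf_finite[OF finite_set_pmf_hist[OF fin]])
  have "?E (Suc T) D \<le> ?E (Suc T) (\<lambda>h. C1 * E h + C2 * (\<Phi> (butlast h) - \<Phi> h))"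
    using step by (intro integral_mono_AE int AE_pmfI)
  also have "\<dots> = C1 * ?E (Suc T) E + C2 * (?E (Suc T) (\<lambda>h. \<Phi> (butlast h)) - ?E (Suc T) \<Phi>)"
    unfolding Bochner_Integration.integral_add[OF int int] integral_mult_right_zero
      Bochner_Integration.integral_diff[OF int int] ..
  also have "?E (Suc T) (\<lambda>h. \<Phi> (butlast h)) = ?E T \<Phi>"
    by (rule expectation_hist_butlast)
  finally show ?case using Suc.IH by (simp add: algebra_simps)
qed simp

lemma prox_sgd_expected_stationarity:
  fixes f r :: "'a::{real_inner,perfect_space} \<Rightarrow> real" and gradf :: "'a \<Rightarrow> 'a"
    and g :: "'a \<Rightarrow> nat set \<Rightarrow> 'a" and X :: "nat set list \<Rightarrow> 'a"
  assumes der: "\<And>z. GDERIV f z :> gradf z"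
    and lip: "\<And>x y. norm (gradf x - gradf y) \<le> L * norm (x - y)"
    and L: "0 < L" and eta: "0 < eta" and small: "L * eta < 1/2"
    and fin: "finite (set_pmf Sam)"
    and X_step: "\<And>h S. set (h @ [S]) \<subseteq> set_pmf Sam \<Longrightarrow>
      X (h @ [S]) \<in> prox eta r (X h - eta *\<^sub>R g (X h) S)"
    and xstar_min: "\<And>x. f xstar + r xstar \<le> f x + r x"
  shows "(\<Sum>t=1..T. measure_pmf.expectation (hist Sam t)
            (\<lambda>h. (infdist 0 (frechet_subdiff (\<lambda>z. f z + r z) (X h)))\<^sup>2))
    \<le> (1 + 4*L*eta - 2*L\<^sup>2*eta\<^sup>2) / (L*eta - 2*L\<^sup>2*eta\<^sup>2)
        * (\<Sum>t=1..T. measure_pmf.expectation (hist Sam t)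
            (\<lambda>h. (norm (gradf (X (butlast h)) - g (X (butlast h)) (last h)))\<^sup>2))
      + (2 + 4*L*eta + 4*L\<^sup>2*eta\<^sup>2) / (eta - 2*L*eta\<^sup>2) * ((f (X []) + r (X [])) - (f xstar + r xstar))"
    (is "?lhs \<le> ?C1 * ?err + ?C2 * _")
proof -
  define F where "F = (\<lambda>z. f z + r z)"
  have C2: "0 \<le> ?C2"
    using L eta small by (simp add: power2_eq_square algebra_simps)
  have "?lhs \<le> ?C1 * ?err + ?C2 * (F (X []) - measure_pmf.expectation (hist Sam T) (\<lambda>h. F (X h)))"
    unfolding F_def
  proof (rule expectation_hist_telescope[OF fin])
    fix t h assume "h \<in> set_pmf (hist Sam (Suc t))"
    then have "length h = Suc t" and "set h \<subseteq> set_pmf Sam" using set_pmf_hist by blast+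
    moreover from this have "butlast h @ [last h] = h" by (intro append_butlast_last_id) auto
    ultimately have "X h \<in> prox eta r (X (butlast h) - eta *\<^sub>R g (X (butlast h)) (last h))"
      using X_step[of "butlast h" "last h"] by simp
    then show "(infdist 0 (frechet_subdiff (\<lambda>z. f z + r z) (X h)))\<^sup>2
        \<le> ?C1 * (norm (gradf (X (butlast h)) - g (X (butlast h)) (last h)))\<^sup>2
          + ?C2 * ((f (X (butlast h)) + r (X (butlast h))) - (f (X h) + r (X h)))"
      by (rule prox_grad_step_stationarity[OF der lip L eta small])
  qed
  moreover have "F xstar \<le> measure_pmf.expectation (hist Sam T) (\<lambda>h. F (X h))"
    using xstar_min unfolding F_def
    by (intro measure_pmf.integral_ge_const integrable_measure_pmf_finite finite_set_pmf_hist fin AE_pmfI)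
  then have "?C2 * (F (X []) - measure_pmf.expectation (hist Sam T) (\<lambda>h. F (X h)))
      \<le> ?C2 * (F (X []) - F xstar)"
    using C2 by (intro mult_left_mono) auto
  ultimately show ?thesis unfolding F_def by linarith
qed

theorem theorem4p2:
  fixes n :: nat
    and fi :: "nat \<Rightarrow> 'a::euclidean_space \<Rightarrow> real"
    and gf :: "nat \<Rightarrow> 'a \<Rightarrow> 'a"
    and G L :: "nat \<Rightarrow> real"
    and r :: "'a \<Rightarrow> real"
    and Sam :: "nat set pmf"
    and eta :: real
    and x1 xstar :: 'a
    and X :: "nat set list \<Rightarrow> 'a"
    and T :: nat
  assumes grad: "\<And>i x. i \<in> {1..n} \<Longrightarrow> GDERIV (fi i) x :> gf i x"
    and bounded: "\<And>i x. i \<in> {1..n} \<Longrightarrow> norm (gf i x) \<le> G i"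
    and lipschitz: "\<And>i x y. i \<in> {1..n} \<Longrightarrow> norm (gf i x - gf i y) \<le> L i * norm (x - y)"
    and prox_ex: "\<And>y. prox eta r y \<noteq> {}"
    and xstar_min: "\<And>x. (1 / real n) * (\<Sum>i=1..n. fi i x) + r x
                        \<ge> (1 / real n) * (\<Sum>i=1..n. fi i xstar) + r xstar"
    and Lpos: "(\<Sum>i=1..n. L i) / real n > 0"
    and sampling: "set_pmf Sam \<subseteq> Pow {1..n}"
    and proper: "\<And>i. i \<in> {1..n} \<Longrightarrow> incl_prob Sam i > 0"
    and eta_pos: "0 < eta"
    and eta_le: "eta < 1 / (2 * ((\<Sum>i=1..n. L i) / real n))"
    and X_init: "X [] = x1"
    and X_step: "\<And>h S. set (h @ [S]) \<subseteq> set_pmf Sam \<Longrightarrow>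
                   X (h @ [S]) \<in> prox eta r (X h - eta *\<^sub>R est_grad n Sam gf (X h) S)"
    and T_pos: "T \<ge> 1"
  shows "(let Lt = (\<Sum>i=1..n. L i) / real n;
              F = (\<lambda>x. (1 / real n) * (\<Sum>i=1..n. fi i x) + r x);
              gradf = (\<lambda>x. (1 / real n) *\<^sub>R (\<Sum>i=1..n. gf i x));
              C1 = (1 + 4 * Lt * eta - 2 * Lt\<^sup>2 * eta\<^sup>2) / (Lt * eta - 2 * Lt\<^sup>2 * eta\<^sup>2);
              C2 = (2 + 4 * Lt * eta + 4 * Lt\<^sup>2 * eta\<^sup>2) / (eta - 2 * Lt * eta\<^sup>2);
              Delta = F x1 - F xstar
          in (1 / real T) * (\<Sum>t=1..T. measure_pmf.expectation (hist Sam t)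
                   (\<lambda>h. (infdist 0 (frechet_subdiff F (X h)))\<^sup>2))
             \<le> (C1 / real T) * (\<Sum>t=1..T. measure_pmf.expectation (hist Sam t)
                   (\<lambda>h. (norm (gradf (X (butlast h)) - est_grad n Sam gf (X (butlast h)) (last h)))\<^sup>2))
               + (C2 / real T) * Delta)"
proof -
  define Lt where "Lt = (\<Sum>i=1..n. L i) / real n"
  define f where "f x = (1 / real n) * (\<Sum>i=1..n. fi i x)" for x
  define gradf where "gradf x = (1 / real n) *\<^sub>R (\<Sum>i=1..n. gf i x)" for x
  have Lt: "0 < Lt" using Lpos by (simp add: Lt_def)
  have small: "Lt * eta < 1/2" using eta_le[folded Lt_def] Lt by (simp add: less_divide_eq algebra_simps)
  have der: "GDERIV f z :> gradf z" for z
    unfolding f_def gradf_def using grad by (rule GDERIV_scaled_sum)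
  have lip: "norm (gradf x - gradf y) \<le> Lt * norm (x - y)" for x y
    using lipschitz_scaled_sum[of "1 / real n" "{1..n}" gf x y L] lipschitz
    by (simp add: gradf_def Lt_def)
  have fin: "finite (set_pmf Sam)" using sampling by (rule finite_subset) simp
  have average: "(1 / real T) * a \<le> (C1 / real T) * b + (C2 / real T) * c"
    if "a \<le> C1 * b + C2 * c" for a b c C1 C2 :: real
    using that T_pos by (simp add: divide_right_mono add_divide_distrib[symmetric])
  from prox_sgd_expected_stationarity[OF der lip Lt eta_pos small fin X_step xstar_min[folded f_def]]
  show ?thesis
    unfolding Let_def f_def gradf_def Lt_def X_init[symmetric] by (rule average)
qed

end
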